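(* Assume $a^2\rho(\mathbf P_1\mathbf E)<1$. Then for every timestep $k$ and every $D\in\mathbb N$ the look-ahead function $\mathcal G_k^D$ is finite and equals \begin{align*} \mathcal G_k^D =\;& g_D(\bar a^2,\mathbf p_k)\,x_k^2 + 2\big(g_D(a\bar a,\mathbf p_k)-g_D(\bar a^2,\mathbf p_k)\big)x_kz_k\\ &+\big(g_D(a^2,\mathbf p_k)+g_D(\bar a^2,\mathbf p_k)-2g_D(a\bar a,\mathbf p_k)\big)z_k^2 + \bar M\big(g_D(a^2,\mathbf p_k)-g_D(1,\mathbf p_k)\big)\\ &-\Big(B\,f_D(1,\mathbf p_k)+N_k\big[g_D(c^2,\mathbf p_k)-f_D(c^2,\mathbf p_k)\big]\Big), \end{align*} where $N_k:=c^{2(k-R_k)}x_{R_k}^2$, $$g_D(b,\mathbf p):=b^D\,\mathbf d^T(\mathbf I-b\mathbf P_1\mathbf E)^{-1}\mathbf P_0^{D}\mathbf p,\qquad f_D(b,\mathbf p):=b^{\mu}\,\mathbf d^T(\mathbf P_1\mathbf E)^{\mu-D}(\mathbf I-b\mathbf P_1\mathbf E)^{-1}\mathbf P_0^{D}\mathbf p,$$ and $$\mu:=\max\Big\{D,\ \Big\lceil \tfrac{\log(x_{R_k}^2/B)}{\log(1/c^2)}\Big\rceil-(k-R_k)\Big\}$$ (with $\mu:=D$ if $x_{R_k}=0$).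
   Context: Setup. Fix reals $a,L$ with $|a|>1$ and $\bar a:=a+L$ satisfying $0<\bar a^2<1$; fix $c$ with $\bar a^2<c^2<1$, $M>0$, $B>0$, and put $\bar M:=M/(a^2-1)$. Plant: $x_{k+1}=ax_k+u_k+v_k$, $k\in\mathbb N_0$, where $v_k$ are i.i.d. real random variables with mean $0$ and variance $M$, independent of everything else. At each time the sensor chooses $t_k\in\{0,1\}$ (transmit or not); $r_k\in\{0,1\}$ is the reception indicator ($r_k=0$ whenever $t_k=0$). Controller: $u_k=L\hat x_k^+$, with $\hat x_k:=\bar a\hat x_{k-1}^+$, $\hat x_k^+:=x_k$ if $r_k=1$ and $\hat x_k^+:=\hat x_k$ if $r_k=0$; errors $z_k:=x_k-\hat x_k$, $z_k^+:=x_k-\hat x_k^+$. Channel: state $\gamma_k\in\{1,\dots,n\}$; given $\gamma_k=j$ and $t_k=\ell\in\{0,1\}$, $\gamma_{k+1}=i$ with probability $(\mathbf P_\ell)_{ij}$, where $\mathbf P_0,\mathbf P_1$ are $n\times n$ column-stochastic matrices. Drop probabilities $\mathbf e=(e_1,\dots,e_n)^T\in[0,1]^n$: if $t_k=1$ then $r_k=1$ with probability $1-e_{\gamma_k}$, else $r_k=0$. $\mathbf E:=\mathrm{diag}(\mathbf e)$, $\mathbf d:=\mathbf 1-\mathbf e$; $\rho(\cdot)$ is spectral radius, $\boldsymbol\delta_i$ the $i$-th standard basis vector. Convention $r_0=1$; $R_k:=\max\{i<k:r_i=1\}$, $R_k^+:=\max\{i\le k:r_i=1\}$; $S_0:=0$,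 $S_{j+1}:=\min\{k>S_j:r_k=1\}$ (the $j$-th reception time). After a reception at time $k$ the sensor learns $\gamma_k$. $\mathbf p_k$ is the conditional distribution of $\gamma_k$ given $R_k,\gamma_{R_k}$ and $t_{R_k},\dots,t_{k-1}$. Information sets: $I_k:=\{k,x_k,z_k,R_k,x_{R_k},\mathbf p_k,t_{k-1},r_{k-1}\gamma_{k-1}\}$. Performance function: $h_k:=x_k^2-\max\{c^{2(k-R_k)}x_{R_k}^2,B\}$. Nominal policy $\mathcal T_k^D$ ($D\in\mathbb N_0$): $t_i=0$ for $i\in\{k,\dots,k+D-1\}$ and $t_i=1$ for all $i\ge k+D$. Look-ahead function: $\mathcal G_k^D:=\mathbb E_{\mathcal T_k^D}[h_{S_{j+1}}\mid I_k,\,S_j=R_k]$, i.e. the expected value of $h$ at the first reception time after $R_k$ when no reception occurs in $(R_k,k)$ and the nominal policy $\mathcal T_k^D$ is used from time $k$ on. Under this policy, the probability that this first reception happens at time $k+w$ ($w\ge D$), given channel distribution $\mathbf p$ at time $k$, is $\Omega_D(w,\mathbf p)=\mathbf d^T(\mathbf P_1\mathbf E)^{w-D}\mathbf P_0^{D}\mathbf p$. *)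

theory Defs
  imports "HOL-Probability.Probability"
begin

fun mpow :: "real^'n^'n \<Rightarrow> nat \<Rightarrow> real^'n^'n" where
  "mpow A 0 = mat 1"
| "mpow A (Suc m) = A ** mpow A m"

definition cmat :: "real^'n^'m \<Rightarrow> complex^'n^'m" where
  "cmat A = (\<chi> i j. complex_of_real (A $ i $ j))"

definition spectral_radius :: "real^'n^'n \<Rightarrow> real" where
  "spectral_radius A =
     Sup {cmod l | l. \<exists>v::complex^'n. v \<noteq> 0 \<and> cmat A *v v = l *s v}"

definition diag_mat :: "real^'n \<Rightarrow> real^'n^'n" where
  "diag_mat e = (\<chi> i j. if i = j then e $ i else 0)"

text \<open>Column-stochastic: (P)_{ij} = probability of moving to i from j.\<close>
definition column_stochastic :: "real^'n^'n \<Rightarrow> bool" where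
  "column_stochastic P \<longleftrightarrow> (\<forall>i j. 0 \<le> P $ i $ j) \<and> (\<forall>j. (\<Sum>i\<in>UNIV. P $ i $ j) = 1)"

definition prob_vector :: "real^'n \<Rightarrow> bool" where
  "prob_vector p \<longleftrightarrow> (\<forall>i. 0 \<le> p $ i) \<and> (\<Sum>i\<in>UNIV. p $ i) = 1"

definition Omega :: "real^'n^'n \<Rightarrow> real^'n^'n \<Rightarrow> real^'n \<Rightarrow> nat \<Rightarrow> nat \<Rightarrow> real^'n \<Rightarrow> real" where
  "Omega P0 P1 e D w p =
     (\<chi> i. 1 - e $ i) \<bullet> (mpow (P1 ** diag_mat e) (w - D) *v (mpow P0 D *v p))"

definition gD :: "real^'n^'n \<Rightarrow> real^'n^'n \<Rightarrow> real^'n \<Rightarrow> nat \<Rightarrow> real \<Rightarrow> real^'n \<Rightarrow> real" where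
  "gD P0 P1 e D b p = b ^ D *
     ((\<chi> i. 1 - e $ i) \<bullet> (matrix_inv (mat 1 - b *\<^sub>R (P1 ** diag_mat e)) *v (mpow P0 D *v p)))"

definition fD :: "real^'n^'n \<Rightarrow> real^'n^'n \<Rightarrow> real^'n \<Rightarrow> nat \<Rightarrow> nat \<Rightarrow> real \<Rightarrow> real^'n \<Rightarrow> real" where
  "fD P0 P1 e D \<mu> b p = b ^ \<mu> *
     ((\<chi> i. 1 - e $ i) \<bullet> (mpow (P1 ** diag_mat e) (\<mu> - D) *v
        (matrix_inv (mat 1 - b *\<^sub>R (P1 ** diag_mat e)) *v (mpow P0 D *v p))))"

definition mu :: "nat \<Rightarrow> real \<Rightarrow> real \<Rightarrow> real \<Rightarrow> nat \<Rightarrow> nat \<Rightarrow> nat" where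
  "mu D c B xR k R =
     (if xR = 0 then D
      else nat (max (int D) (\<lceil>ln (xR\<^sup>2 / B) / ln (1 / c\<^sup>2)\<rceil> - int (k - R))))"

text \<open>Starting at time k from plant state x and controller estimate xh (= \<open>\<hat>x_k\<close>),
  with no reception at times k, ..., k+j-1: \<open>u_i = L \<hat>x_i\<close>,
  \<open>x_{i+1} = a x_i + u_i + v_i\<close>, \<open>\<hat>x_{i+1} = (a+L) \<hat>x_i\<close>.\<close>
fun traj :: "real \<Rightarrow> real \<Rightarrow> (nat \<Rightarrow> 'w \<Rightarrow> real) \<Rightarrow> nat \<Rightarrow> real \<Rightarrow> real \<Rightarrow> nat \<Rightarrow> 'w \<Rightarrow> real \<times> real" where
  "traj a L v k x xh 0 \<omega> = (x, xh)"
| "traj a L v k x xh (Suc j) \<omega> =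
     (let (x', xh') = traj a L v k x xh j \<omega>
      in (a * x' + L * xh' + v (k + j) \<omega>, (a + L) * xh'))"

definition h_at :: "real \<Rightarrow> real \<Rightarrow> real \<Rightarrow> real \<Rightarrow> (nat \<Rightarrow> 'w \<Rightarrow> real) \<Rightarrow> nat \<Rightarrow> nat \<Rightarrow> real \<Rightarrow> real \<Rightarrow> real \<Rightarrow> nat \<Rightarrow> 'w \<Rightarrow> real" where
  "h_at a L c B v k R xk zk xR w \<omega> =
     (fst (traj a L v k xk (xk - zk) w \<omega>))\<^sup>2 - max (c ^ (2 * (k + w - R)) * xR\<^sup>2) B"

text \<open>Look-ahead function \<open>G_k^D\<close>: expected value of h at the first reception time k+w
  (w \<ge> D), which has probability \<open>\<Omega>_D(w,p_k)\<close> and is independent of the noise;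
  the noise expectation is taken w.r.t. the probability space Mm.\<close>
definition lookahead ::
  "'w measure \<Rightarrow> real \<Rightarrow> real \<Rightarrow> real \<Rightarrow> real \<Rightarrow> (nat \<Rightarrow> 'w \<Rightarrow> real) \<Rightarrow>
   real^'n^'n \<Rightarrow> real^'n^'n \<Rightarrow> real^'n \<Rightarrow> nat \<Rightarrow> nat \<Rightarrow> nat \<Rightarrow> real \<Rightarrow> real \<Rightarrow> real \<Rightarrow> real^'n \<Rightarrow> real" where
  "lookahead Mm a L c B v P0 P1 e D k R xk zk xR p =
     (\<Sum>j. Omega P0 P1 e D (D + j) p * integral\<^sup>L Mm (h_at a L c B v k R xk zk xR (D + j)))"

end

theory Submission
  imports Defs "HOL-Complex_Analysis.Complex_Analysis"
begin

(* Between receptions the closed loop is linear: started at time k with estimation error z,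
   x_{k+w} = abar^w (x - z) + a^w z + sum_{i<w} a^{w-1-i} v_{k+i}.  As the noise is white,
   E h_{k+w} is a combination of the geometric sequences abar^{2w}, (a abar)^w, a^{2w} and 1,
   minus max {c^{2(k+w-R)} x_R^2, B}, which is its first argument exactly for w < mu.
   Weighting with Omega_D(w,p) = d^T (P1 E)^{w-D} P0^D p and summing turns each geometric
   sequence b^w into the Neumann series b^D d^T (sum_j b^j (P1 E)^j) P0^D p = g_D(b,p), or
   into f_D(b,p) for the tail w >= mu.  All bases satisfy |b| <= a^2, and the series converge
   because a^2 rho(P1 E) < 1: by Cramer's rule the entries of (I - z M)^{-1} are holomorphic
   in |z| rho(M) < 1, so their Taylor series, whose coefficients are the entries of M^n,
   converge there.

   Only the first two moments of the noise enter. *)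

no_notation fps_nth (infixl "$" 75)

section \<open>Second moments of the closed loop between receptions\<close>

lemma traj_closed_form:
  "traj a L v k x xh w \<omega> =
    ((a + L)^w * xh + a^w * (x - xh) + (\<Sum>i<w. a^(w - Suc i) * v (k + i) \<omega>), (a + L)^w * xh)"
proof (induction w)
  case 0
  then show ?case by simp
next
  case (Suc w)
  have "a * (\<Sum>i<w. a^(w - Suc i) * v (k + i) \<omega>) = (\<Sum>i<w. a^(Suc w - Suc i) * v (k + i) \<omega>)"
    by (auto simp: sum_distrib_left Suc_diff_Suc simp flip: power_Suc intro!: sum.cong)
  then show ?case using Suc by (simp add: algebra_simps)
qed

locale white_noise = prob_space +
  fixes v :: "nat \<Rightarrow> 'a \<Rightarrow> real" and \<sigma>2 :: real
  assumes indep_noise: "indep_vars (\<lambda>_. borel) v UNIV"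
    and square_integrable_noise: "\<And>i. integrable M (\<lambda>\<omega>. (v i \<omega>)\<^sup>2)"
    and expectation_noise: "\<And>i. expectation (v i) = 0"
    and variance_noise: "\<And>i. variance (v i) = \<sigma>2"
begin

lemma integrable_noise: "integrable M (v i)"
  using indep_noise square_integrable_noise
  by (auto simp: indep_vars_def intro: square_integrable_imp_integrable)

lemma integrable_noise_product: "integrable M (\<lambda>\<omega>. v i \<omega> * v j \<omega>)"
proof (cases "i = j")
  case True
  then show ?thesis using square_integrable_noise[of i] by (simp add: power2_eq_square)
next
  case False
  have "integrable M (\<lambda>\<omega>. \<Prod>l\<in>{i, j}. v l \<omega>)"
    using indep_vars_subset[OF indep_noise]
    by (intro indep_vars_integrable) (auto simp: integrable_noise)
  then show ?thesis using False by simp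
qed

lemma expectation_noise_product:
  "expectation (\<lambda>\<omega>. v i \<omega> * v j \<omega>) = (if i = j then \<sigma>2 else 0)"
proof (cases "i = j")
  case True
  then show ?thesis
    using variance_noise[of i] expectation_noise[of i] by (simp add: power2_eq_square)
next
  case False
  have "expectation (\<lambda>\<omega>. \<Prod>l\<in>{i, j}. v l \<omega>) = (\<Prod>l\<in>{i, j}. expectation (v l))"
    using indep_vars_subset[OF indep_noise]
    by (intro indep_vars_lebesgue_integral) (auto simp: integrable_noise)
  then show ?thesis using False by (simp add: expectation_noise)
qed

lemma
  assumes "finite I"
  shows integrable_affine_noise_square: "integrable M (\<lambda>\<omega>. (\<alpha> + (\<Sum>i\<in>I. c i * v i \<omega>))\<^sup>2)"
    and expectation_affine_noise_square:
      "expectation (\<lambda>\<omega>. (\<alpha> + (\<Sum>i\<in>I. c i * v i \<omega>))\<^sup>2) = \<alpha>\<^sup>2 + \<sigma>2 * (\<Sum>i\<in>I. (c i)\<^sup>2)"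
proof -
  have expand: "(\<lambda>\<omega>. (\<alpha> + (\<Sum>i\<in>I. c i * v i \<omega>))\<^sup>2) = (\<lambda>\<omega>. \<alpha>\<^sup>2
      + (\<Sum>i\<in>I. (2 * \<alpha> * c i) * v i \<omega>)
      + (\<Sum>i\<in>I. \<Sum>j\<in>I. (c i * c j) * (v i \<omega> * v j \<omega>)))"
    by (auto simp: power2_eq_square algebra_simps sum_distrib_left sum_distrib_right sum.distrib
        intro!: sum.cong)
  have integrable_linear: "integrable M (\<lambda>\<omega>. \<Sum>i\<in>I. (2 * \<alpha> * c i) * v i \<omega>)"
    and integrable_quadratic: "integrable M (\<lambda>\<omega>. \<Sum>i\<in>I. \<Sum>j\<in>I. (c i * c j) * (v i \<omega> * v j \<omega>))"
    by (intro Bochner_Integration.integrable_sum integrable_mult_right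
        integrable_noise integrable_noise_product)+
  show "integrable M (\<lambda>\<omega>. (\<alpha> + (\<Sum>i\<in>I. c i * v i \<omega>))\<^sup>2)"
    unfolding expand by (intro Bochner_Integration.integrable_add integrable_linear integrable_quadratic) simp
  have "expectation (\<lambda>\<omega>. (\<alpha> + (\<Sum>i\<in>I. c i * v i \<omega>))\<^sup>2)
      = \<alpha>\<^sup>2 + (\<Sum>i\<in>I. \<Sum>j\<in>I. (c i * c j) * (if i = j then \<sigma>2 else 0))"
    unfolding expand using integrable_linear integrable_quadratic
    by (simp add: integrable_noise integrable_noise_product expectation_noise
        expectation_noise_product prob_space)
  also have "\<dots> = \<alpha>\<^sup>2 + \<sigma>2 * (\<Sum>i\<in>I. (c i)\<^sup>2)"
    using assms by (simp add: if_distrib sum.If_cases power2_eq_square sum_distrib_left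
        mult.commute cong: if_cong)
  finally show "expectation (\<lambda>\<omega>. (\<alpha> + (\<Sum>i\<in>I. c i * v i \<omega>))\<^sup>2) = \<alpha>\<^sup>2 + \<sigma>2 * (\<Sum>i\<in>I. (c i)\<^sup>2)" .
qed

lemma h_at_eq_affine_noise_square:
  "h_at a L c B v k R x z xR w = (\<lambda>\<omega>.
     ((a + L)^w * (x - z) + a^w * z + (\<Sum>i\<in>{k..<k + w}. a^(k + w - Suc i) * v i \<omega>))\<^sup>2
     - max (c ^ (2 * (k + w - R)) * xR\<^sup>2) B)"
proof -
  have "(\<Sum>i<w. a^(w - Suc i) * v (k + i) \<omega>) = (\<Sum>i\<in>{k..<k + w}. a^(k + w - Suc i) * v i \<omega>)"
    for \<omega>
    by (rule sum.reindex_bij_witness[where i="\<lambda>i. i - k" and j="\<lambda>i. i + k"]) (auto simp: add.commute)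
  then show ?thesis
    by (simp add: h_at_def traj_closed_form fun_eq_iff)
qed

lemma integrable_h_at: "integrable M (h_at a L c B v k R x z xR w)"
  unfolding h_at_eq_affine_noise_square
  by (intro Bochner_Integration.integrable_diff integrable_affine_noise_square) simp_all

lemma expectation_h_at:
  assumes "a\<^sup>2 \<noteq> 1"
  shows "expectation (h_at a L c B v k R x z xR w) =
    ((a + L)\<^sup>2)^w * (x - z)\<^sup>2 + (a * (a + L))^w * (2 * (x - z) * z) + (a\<^sup>2)^w * z\<^sup>2
    + \<sigma>2 / (a\<^sup>2 - 1) * ((a\<^sup>2)^w - 1) - max (c ^ (2 * (k + w - R)) * xR\<^sup>2) B"
proof -
  have "(\<Sum>i\<in>{k..<k + w}. (a^(k + w - Suc i))\<^sup>2) = (\<Sum>i<w. (a\<^sup>2)^(w - Suc i))"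
    by (rule sum.reindex_bij_witness[where i="\<lambda>i. i + k" and j="\<lambda>i. i - k"])
      (auto simp: power_mult[symmetric] mult.commute add.commute)
  also have "\<dots> = ((a\<^sup>2)^w - 1) / (a\<^sup>2 - 1)"
    using assms by (simp add: sum.nat_diff_reindex sum_gp_strict field_simps)
  finally have noise_part: "(\<Sum>i\<in>{k..<k + w}. (a^(k + w - Suc i))\<^sup>2) = ((a\<^sup>2)^w - 1) / (a\<^sup>2 - 1)" .
  have "((a + L)^w * (x - z) + a^w * z)\<^sup>2
      = ((a + L)\<^sup>2)^w * (x - z)\<^sup>2 + (a * (a + L))^w * (2 * (x - z) * z) + (a\<^sup>2)^w * z\<^sup>2"
    by (simp only: power2_eq_square power_mult_distrib) (simp add: algebra_simps)
  then show ?thesis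
    unfolding h_at_eq_affine_noise_square
    by (simp add: Bochner_Integration.integral_diff integrable_affine_noise_square
        expectation_affine_noise_square noise_part prob_space)
qed

end

section \<open>Matrix powers under a spectral radius bound\<close>

lemma mpow_add: "mpow A (m + n) = mpow A m ** mpow A n"
  by (induction m) (simp_all add: matrix_mul_assoc)

lemma row_abs_sum_le_abs_sum:
  fixes M :: "real^'n^'n"
  shows "(\<Sum>l\<in>UNIV. \<bar>M $ i $ l\<bar>) \<le> (\<Sum>r\<in>UNIV. \<Sum>s\<in>UNIV. \<bar>M $ r $ s\<bar>)"
  by (rule member_le_sum[where f="\<lambda>r. \<Sum>s\<in>UNIV. \<bar>M $ r $ s\<bar>"]) (auto intro: sum_nonneg)

lemma abs_mpow_entry_le:
  fixes M :: "real^'n^'n"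
  shows "\<bar>mpow M n $ i $ k\<bar> \<le> (1 + (\<Sum>r\<in>UNIV. \<Sum>s\<in>UNIV. \<bar>M $ r $ s\<bar>)) ^ n"
proof (induction n arbitrary: i k)
  case 0
  then show ?case by (simp add: mat_def)
next
  case (Suc n)
  define C where "C = 1 + (\<Sum>r\<in>UNIV. \<Sum>s\<in>UNIV. \<bar>M $ r $ s\<bar>)"
  have "\<bar>mpow M (Suc n) $ i $ k\<bar> \<le> (\<Sum>l\<in>UNIV. \<bar>M $ i $ l\<bar> * C ^ n)"
    unfolding mpow.simps matrix_matrix_mult_def vec_lambda_beta
    by (rule order_trans[OF sum_abs])
      (auto intro!: sum_mono mult_left_mono simp: abs_mult Suc[unfolded C_def[symmetric]])
  also have "\<dots> \<le> C * C ^ n"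
    using row_abs_sum_le_abs_sum[of M i]
    by (simp add: C_def sum_distrib_right[symmetric] mult_right_mono sum_nonneg)
  finally show ?case by (simp add: C_def)
qed

lemma cmat_mult: "cmat (A ** B) = cmat A ** cmat B"
  by (simp add: cmat_def vec_eq_iff matrix_matrix_mult_def)

lemma cmat_one: "cmat (mat 1) = mat 1"
  by (simp add: cmat_def vec_eq_iff mat_def)

(* I - z M, written entrywise because a complex z cannot act on matrices through scaleR. *)
definition id_minus_smult :: "'a::ring_1 \<Rightarrow> 'a^'n^'n \<Rightarrow> 'a^'n^'n" where
  "id_minus_smult z M = (\<chi> i j. (if i = j then 1 else 0) - z * M $ i $ j)"

lemma mat_one_minus_scaleR: "mat 1 - b *\<^sub>R M = id_minus_smult b M"
  by (simp add: vec_eq_iff mat_def id_minus_smult_def)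

lemma id_minus_smult_neumann_right_inverse:
  fixes M :: "'a::{real_normed_field,banach}^'n^'n" and X :: "nat \<Rightarrow> 'a^'n^'n"
  assumes X_0: "X 0 = mat 1" and X_Suc: "\<And>n. X (Suc n) = M ** X n"
    and summable_X: "\<And>i k. summable (\<lambda>n. z^n * X n $ i $ k)"
  shows "id_minus_smult z M ** (\<chi> i k. \<Sum>n. z^n * X n $ i $ k) = mat 1"
proof -
  define S where "S = (\<chi> i k. \<Sum>n. z^n * X n $ i $ k)"
  have S_sums: "(\<lambda>n. z^n * X n $ i $ k) sums S $ i $ k" for i k
    using summable_X by (simp add: S_def summable_sums)
  have "(\<lambda>n. z^n * X (Suc n) $ i $ k) sums (M ** S) $ i $ k" for i k
  proof -
    have "(\<lambda>n. \<Sum>l\<in>UNIV. M $ i $ l * (z^n * X n $ l $ k)) sums (\<Sum>l\<in>UNIV. M $ i $ l * S $ l $ k)"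
      by (intro sums_sum sums_mult S_sums)
    then show ?thesis
      by (simp add: X_Suc matrix_matrix_mult_def sum_distrib_left algebra_simps)
  qed
  then have shifted: "(\<lambda>n. z^(Suc n) * X (Suc n) $ i $ k) sums (z * (M ** S) $ i $ k)" for i k
    using sums_mult by (fastforce simp: mult.assoc)
  have entry: "S $ i $ k = z * (M ** S) $ i $ k + mat 1 $ i $ k" for i k
  proof -
    have "(\<lambda>n. z^n * X n $ i $ k) sums (z * (M ** S) $ i $ k + z^0 * X 0 $ i $ k)"
      using shifted sums_Suc_iff[where f="\<lambda>n. z^n * X n $ i $ k"] by blast
    then show ?thesis
      using sums_unique2[OF S_sums] by (simp add: X_0)
  qed
  have "(id_minus_smult z M ** S) $ i $ k = S $ i $ k - z * (M ** S) $ i $ k" for i k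
    by (simp add: id_minus_smult_def matrix_matrix_mult_def left_diff_distrib sum_subtractf
        sum_distrib_left mult.assoc if_distrib[of "\<lambda>x. x * _"] cong: if_cong)
  then show ?thesis
    unfolding S_def[symmetric] by (simp add: vec_eq_iff entry)
qed

lemma matrix_inv_unique:
  fixes A S :: "'a::field^'n^'n"
  assumes "A ** S = mat 1"
  shows "matrix_inv A = S"
proof -
  have inverse: "A ** matrix_inv A = mat 1 \<and> matrix_inv A ** A = mat 1"
    unfolding matrix_inv_def
    by (rule someI[of _ S]) (use assms matrix_left_right_inverse in blast)
  have "matrix_inv A = matrix_inv A ** (A ** S)"
    by (simp add: assms)
  also have "\<dots> = (matrix_inv A ** A) ** S"
    by (simp add: matrix_mul_assoc)
  finally show ?thesis using inverse by simp
qed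

lemma matrix_inv_entry_cramer:
  fixes A :: "'a::field^'n^'n"
  assumes "det A \<noteq> 0"
  shows "matrix_inv A $ i $ k =
    det (\<chi> r s. if s = i then (if r = k then 1 else 0) else A $ r $ s) / det A"
proof -
  obtain S where S: "A ** S = mat 1"
    using assms invertible_det_nz invertible_right_inverse by blast
  have "A *v (\<chi> l. S $ l $ k) = (\<chi> r. if r = k then 1 else 0)"
    using S by (simp add: vec_eq_iff matrix_vector_mult_def matrix_matrix_mult_def mat_def)
  then have "(\<chi> l. S $ l $ k) = (\<chi> j. det (\<chi> r s. if s = j then (\<chi> r. if r = k then 1 else 0) $ r
      else A $ r $ s) / det A)"
    using cramer[OF assms] by blast
  from arg_cong[where f="\<lambda>x. x $ i", OF this] show ?thesis
    by (simp add: matrix_inv_unique[OF S] cong: if_cong)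
qed

lemma holomorphic_on_det:
  fixes A :: "complex \<Rightarrow> complex^'n^'n"
  assumes "\<And>r s. (\<lambda>z. A z $ r $ s) holomorphic_on S"
  shows "(\<lambda>z. det (A z)) holomorphic_on S"
  unfolding det_def by (intro holomorphic_intros assms)

lemma holomorphic_on_matrix_inv_entry:
  fixes A :: "complex \<Rightarrow> complex^'n^'n"
  assumes entries: "\<And>r s. (\<lambda>z. A z $ r $ s) holomorphic_on S"
    and det_nonzero: "\<And>z. z \<in> S \<Longrightarrow> det (A z) \<noteq> 0"
  shows "(\<lambda>z. matrix_inv (A z) $ i $ k) holomorphic_on S"
proof (rule holomorphic_transform)
  have "(\<lambda>z. (\<chi> r s. if s = i then (if r = k then 1 else 0) else A z $ r $ s) $ r $ s)
      holomorphic_on S" for r s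
    using entries by (cases "s = i") auto
  then show "(\<lambda>z. det (\<chi> r s. if s = i then (if r = k then 1 else 0) else A z $ r $ s) / det (A z))
      holomorphic_on S"
    by (intro holomorphic_on_divide holomorphic_on_det entries det_nonzero)
  show "det (\<chi> r s. if s = i then (if r = k then 1 else 0) else A z $ r $ s) / det (A z)
      = matrix_inv (A z) $ i $ k" if "z \<in> S" for z
    using matrix_inv_entry_cramer[OF det_nonzero[OF that]] by simp
qed

(* No sign condition on rho: spectral_radius is a Sup that is never shown to be nonnegative. *)
lemma mult_less_one_if_le:
  fixes s t \<rho> :: real
  assumes "0 \<le> s" and "s \<le> t" and "t * \<rho> < 1"
  shows "s * \<rho> < 1"
  using assms mult_right_mono[OF assms(2), of \<rho>] mult_nonneg_nonpos[OF assms(1), of \<rho>]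
  by (cases "\<rho> \<le> 0") linarith+

lemma eigenvalue_norm_le_abs_sum:
  fixes M :: "real^'n^'n"
  assumes "v \<noteq> 0" and "cmat M *v v = l *s v"
  shows "cmod l \<le> (\<Sum>r\<in>UNIV. \<Sum>s\<in>UNIV. \<bar>M $ r $ s\<bar>)"
proof -
  define m where "m = Max (range (\<lambda>j. cmod (v $ j)))"
  have "m \<in> range (\<lambda>j. cmod (v $ j))"
    unfolding m_def by (rule Max_in) auto
  then obtain i where i: "cmod (v $ i) = m" by auto
  have le_m: "cmod (v $ j) \<le> m" for j
    unfolding m_def by (rule Max_ge) auto
  have "m > 0"
  proof (rule ccontr)
    assume "\<not> m > 0"
    then have "v $ j = 0" for j using le_m[of j] by (meson norm_le_zero_iff not_le order_trans)
    then show False using assms(1) by (simp add: vec_eq_iff)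
  qed
  have "cmod l * m = cmod (\<Sum>j\<in>UNIV. complex_of_real (M $ i $ j) * v $ j)"
    using arg_cong[where f="\<lambda>x. cmod (x $ i)", OF assms(2)] i
    by (simp add: norm_mult matrix_vector_mult_def cmat_def)
  also have "\<dots> \<le> (\<Sum>j\<in>UNIV. \<bar>M $ i $ j\<bar> * m)"
    by (rule order_trans[OF norm_sum]) (auto intro!: sum_mono mult_left_mono le_m simp: norm_mult)
  also have "\<dots> \<le> (\<Sum>r\<in>UNIV. \<Sum>s\<in>UNIV. \<bar>M $ r $ s\<bar>) * m"
    using row_abs_sum_le_abs_sum[of M i] \<open>m > 0\<close> by (simp add: sum_distrib_right[symmetric])
  finally show ?thesis using \<open>m > 0\<close> by simp
qed

lemma eigenvalue_norm_le_spectral_radius: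
  fixes M :: "real^'n^'n"
  assumes "v \<noteq> 0" and "cmat M *v v = l *s v"
  shows "cmod l \<le> spectral_radius M"
  unfolding spectral_radius_def
proof (rule cSup_upper)
  show "cmod l \<in> {cmod l | l. \<exists>v. v \<noteq> 0 \<and> cmat M *v v = l *s v}"
    using assms by blast
  show "bdd_above {cmod l | l. \<exists>v::complex^'n. v \<noteq> 0 \<and> cmat M *v v = l *s v}"
    using eigenvalue_norm_le_abs_sum[of _ M] by (auto simp: bdd_above_def)
qed

lemma det_id_minus_smult_nonzero:
  fixes M :: "real^'n^'n"
  assumes "cmod z * spectral_radius M < 1"
  shows "det (id_minus_smult z (cmat M)) \<noteq> 0"
proof
  assume "det (id_minus_smult z (cmat M)) = 0"
  then obtain x where x: "id_minus_smult z (cmat M) *v x = 0" "x \<noteq> 0"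
    by (metis invertible_det_nz invertible_left_inverse matrix_left_invertible_ker)
  have "(id_minus_smult z (cmat M) *v x) $ i = x $ i - z * (cmat M *v x) $ i" for i
    by (simp add: id_minus_smult_def matrix_vector_mult_def left_diff_distrib sum_subtractf
        sum_distrib_left mult.assoc if_distrib[of "\<lambda>y. y * _"] cong: if_cong)
  then have fixed: "x = z *s (cmat M *v x)"
    using x(1) by (simp add: vec_eq_iff)
  then have "z \<noteq> 0" using x(2) by auto
  with fixed have "cmat M *v x = (1 / z) *s x"
    by (simp add: vec_eq_iff)
  then have "cmod (1 / z) \<le> spectral_radius M"
    using x(2) by (rule eigenvalue_norm_le_spectral_radius[rotated])
  then have "cmod z * cmod (1 / z) \<le> cmod z * spectral_radius M"
    by (simp add: mult_left_mono)
  with \<open>z \<noteq> 0\<close> assms show False by (simp add: norm_divide)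
qed

lemma mpow_entry_has_fps_expansion:
  fixes M :: "real^'n^'n"
  shows "(\<lambda>z. matrix_inv (id_minus_smult z (cmat M)) $ i $ k)
    has_fps_expansion Abs_fps (\<lambda>n. complex_of_real (mpow M n $ i $ k))"
proof -
  define C where "C = 1 + (\<Sum>r\<in>UNIV. \<Sum>s\<in>UNIV. \<bar>M $ r $ s\<bar>)"
  have "C \<ge> 1" by (simp add: C_def sum_nonneg)
  have summable: "summable (\<lambda>n. z^n * cmat (mpow M n) $ i' $ k')" if "norm z < 1 / C" for z i' k'
  proof (rule summable_comparison_test')
    show "summable (\<lambda>n. (norm z * C)^n)"
      using that \<open>C \<ge> 1\<close> by (intro summable_geometric) (auto simp: field_simps)
    show "norm (z^n * cmat (mpow M n) $ i' $ k') \<le> (norm z * C)^n" for n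
      using abs_mpow_entry_le[of M n i' k']
      by (simp add: cmat_def C_def norm_mult norm_power power_mult_distrib mult_left_mono)
  qed
  have neumann: "matrix_inv (id_minus_smult z (cmat M)) $ i $ k
      = (\<Sum>n. complex_of_real (mpow M n $ i $ k) * z^n)" if "norm z < 1 / C" for z
  proof -
    have "matrix_inv (id_minus_smult z (cmat M)) = (\<chi> i k. \<Sum>n. z^n * cmat (mpow M n) $ i $ k)"
      by (intro matrix_inv_unique id_minus_smult_neumann_right_inverse summable[OF that])
        (simp_all add: cmat_one cmat_mult)
    then show ?thesis by (simp add: cmat_def mult.commute)
  qed
  show ?thesis
    unfolding has_fps_expansion_def
  proof
    have inside: "norm (complex_of_real (1 / (2 * C))) < 1 / C"
      unfolding norm_of_real using \<open>C \<ge> 1\<close> by (simp add: field_simps)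
    then have "ereal (norm (complex_of_real (1 / (2 * C))))
        \<le> fps_conv_radius (Abs_fps (\<lambda>n. complex_of_real (mpow M n $ i $ k)))"
      unfolding fps_conv_radius_def
      by (intro conv_radius_geI) (use summable[OF inside, of i k] in \<open>simp add: cmat_def mult.commute\<close>)
    moreover have "0 < ereal (norm (complex_of_real (1 / (2 * C))))"
      unfolding norm_of_real using \<open>C \<ge> 1\<close> by simp
    ultimately show "0 < fps_conv_radius (Abs_fps (\<lambda>n. complex_of_real (mpow M n $ i $ k)))"
      by order
    show "\<forall>\<^sub>F z in nhds 0. eval_fps (Abs_fps (\<lambda>n. complex_of_real (mpow M n $ i $ k))) z
        = matrix_inv (id_minus_smult z (cmat M)) $ i $ k"
      unfolding eventually_nhds
      by (intro exI[of _ "ball 0 (1 / C)"]) (use \<open>C \<ge> 1\<close> in \<open>auto simp: eval_fps_def neumann\<close>)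
  qed
qed

lemma summable_mpow_entry_spectral_radius:
  fixes M :: "real^'n^'n"
  assumes "0 \<le> t" and "t * spectral_radius M < 1"
  shows "summable (\<lambda>n. t^n * \<bar>mpow M n $ i $ k\<bar>)"
proof -
  define \<rho> where "\<rho> = spectral_radius M"
  obtain r where r: "t < r" "r * \<rho> < 1"
  proof (cases "\<rho> \<le> 0")
    case True
    then show ?thesis using that[of "t + 1"] assms(1) by (smt (verit) mult_nonneg_nonpos)
  next
    case False
    then show ?thesis
      using that[of "(t + 1 / \<rho>) / 2"] assms by (auto simp: \<rho>_def field_simps)
  qed
  have "(\<lambda>z. matrix_inv (id_minus_smult z (cmat M)) $ i $ k) holomorphic_on ball 0 r"
  proof (rule holomorphic_on_matrix_inv_entry)
    show "(\<lambda>z. id_minus_smult z (cmat M) $ r' $ s) holomorphic_on ball 0 r" for r' s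
      by (auto simp: id_minus_smult_def intro!: holomorphic_intros)
    show "det (id_minus_smult z (cmat M)) \<noteq> 0" if "z \<in> ball 0 r" for z
    proof (rule det_id_minus_smult_nonzero, rule mult_less_one_if_le)
      show "cmod z \<le> r" using that by simp
    qed (use r(2) in \<open>simp_all add: \<rho>_def\<close>)
  qed
  then have "ereal r \<le> fps_conv_radius (Abs_fps (\<lambda>n. complex_of_real (mpow M n $ i $ k)))"
    unfolding eball_ereal[symmetric]
    by (rule holomorphic_on_imp_fps_conv_radius_ge[OF mpow_entry_has_fps_expansion])
  moreover have "ereal (norm (complex_of_real t)) < ereal r"
    using r(1) assms(1) by simp
  ultimately have "ereal (norm (complex_of_real t))
      < fps_conv_radius (Abs_fps (\<lambda>n. complex_of_real (mpow M n $ i $ k)))"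
    by order
  from norm_summable_fps[OF this] show ?thesis
    by (simp add: norm_mult norm_power assms(1) mult.commute)
qed

section \<open>The look-ahead series\<close>

lemma summable_neumann_entry:
  fixes M :: "real^'n^'n"
  assumes "\<bar>b\<bar> * spectral_radius M < 1"
  shows "summable (\<lambda>n. b^n * mpow M n $ i $ k)"
  by (rule summable_comparison_test'[OF summable_mpow_entry_spectral_radius[OF abs_ge_zero assms, of i k]])
    (simp add: abs_mult power_abs)

lemma matrix_inv_neumann:
  fixes M :: "real^'n^'n"
  assumes "\<bar>b\<bar> * spectral_radius M < 1"
  shows "matrix_inv (mat 1 - b *\<^sub>R M) = (\<chi> i k. \<Sum>n. b^n * mpow M n $ i $ k)"
  unfolding mat_one_minus_scaleR
  by (intro matrix_inv_unique id_minus_smult_neumann_right_inverse summable_neumann_entry[OF assms])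
    simp_all

lemma inner_mpow_sums:
  fixes M :: "real^'n^'n"
  assumes "\<bar>b\<bar> * spectral_radius M < 1"
  shows "(\<lambda>j. b^j * (d \<bullet> (mpow M j *v y))) sums (d \<bullet> (matrix_inv (mat 1 - b *\<^sub>R M) *v y))"
proof -
  have "(\<lambda>j. \<Sum>i\<in>UNIV. \<Sum>k\<in>UNIV. d $ i * (b^j * mpow M j $ i $ k) * y $ k) sums
      (\<Sum>i\<in>UNIV. \<Sum>k\<in>UNIV. d $ i * (\<Sum>n. b^n * mpow M n $ i $ k) * y $ k)"
    by (intro sums_sum sums_mult sums_mult2 summable_sums summable_neumann_entry[OF assms])
  then show ?thesis
    by (simp add: matrix_inv_neumann[OF assms] inner_vec_def matrix_vector_mult_def
        sum_distrib_left sum_distrib_right algebra_simps)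
qed

lemma fD_sums:
  fixes P0 P1 :: "real^'n^'n" and e p :: "real^'n"
  assumes "\<bar>b\<bar> * spectral_radius (P1 ** diag_mat e) < 1" and "D \<le> \<mu>"
  shows "(\<lambda>j. Omega P0 P1 e D (\<mu> + j) p * b^(\<mu> + j)) sums fD P0 P1 e D \<mu> b p"
proof -
  define A where "A = P1 ** diag_mat e"
  define d :: "real^'n" where "d = (\<chi> i. 1 - e $ i)"
  define q where "q = mpow P0 D *v p"
  have "Omega P0 P1 e D (\<mu> + j) p = (d v* mpow A (\<mu> - D)) \<bullet> (mpow A j *v q)" for j
  proof -
    have "\<mu> + j - D = (\<mu> - D) + j" using assms(2) by simp
    then show ?thesis
      by (simp add: Omega_def dot_lmul_matrix mpow_add matrix_vector_mul_assoc
          flip: A_def d_def q_def)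
  qed
  moreover have "fD P0 P1 e D \<mu> b p
      = b^\<mu> * ((d v* mpow A (\<mu> - D)) \<bullet> (matrix_inv (mat 1 - b *\<^sub>R A) *v q))"
    by (simp add: fD_def dot_lmul_matrix flip: A_def d_def q_def)
  ultimately show ?thesis
    using sums_mult[OF inner_mpow_sums[OF assms(1)[folded A_def]], of "b^\<mu>"]
    by (simp add: power_add algebra_simps)
qed

lemma gD_sums:
  fixes P0 P1 :: "real^'n^'n" and e p :: "real^'n"
  assumes "\<bar>b\<bar> * spectral_radius (P1 ** diag_mat e) < 1"
  shows "(\<lambda>j. Omega P0 P1 e D (D + j) p * b^(D + j)) sums gD P0 P1 e D b p"
  using fD_sums[OF assms order_refl] by (simp add: fD_def gD_def)

lemma power_le_threshold_iff:
  fixes x B q :: real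
  assumes "0 < x" and "0 < B" and "0 < q" and "q < 1"
  shows "x * q^n \<le> B \<longleftrightarrow> ln (x / B) / ln (1 / q) \<le> n"
proof -
  have "0 < ln (1 / q)" using assms by simp
  have "x * q^n \<le> B \<longleftrightarrow> ln (x * q^n) \<le> ln B"
    using assms by simp
  also have "\<dots> \<longleftrightarrow> ln (x / B) \<le> n * ln (1 / q)"
    using assms by (simp add: ln_mult ln_realpow ln_div algebra_simps)
  also have "\<dots> \<longleftrightarrow> ln (x / B) / ln (1 / q) \<le> n"
    using \<open>0 < ln (1 / q)\<close> by (simp add: divide_le_eq)
  finally show ?thesis .
qed

lemma mu_ge: "D \<le> mu D c B xR k R"
  unfolding mu_def by auto

lemma max_threshold_eq:
  fixes c B xR :: real
  assumes "0 < c\<^sup>2" and "c\<^sup>2 < 1" and "0 < B" and "R < k"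
  shows "max (c ^ (2 * (k + (D + j) - R)) * xR\<^sup>2) B
    = (if D + j < mu D c B xR k R then c ^ (2 * (k + (D + j) - R)) * xR\<^sup>2 else B)"
proof (cases "xR = 0")
  case True
  then show ?thesis using assms by (simp add: mu_def)
next
  case False
  define n where "n = k + (D + j) - R"
  define T where "T = ln (xR\<^sup>2 / B) / ln (1 / c\<^sup>2)"
  have "D + j < mu D c B xR k R \<longleftrightarrow> int (D + j) < \<lceil>T\<rceil> - int (k - R)"
    using False unfolding mu_def T_def[symmetric] by (simp add: zless_nat_eq_int_zless less_max_iff_disj)
  also have "\<dots> \<longleftrightarrow> int n < \<lceil>T\<rceil>"
    using assms(4) unfolding n_def by linarith
  also have "\<dots> \<longleftrightarrow> real n < ln (xR\<^sup>2 / B) / ln (1 / c\<^sup>2)"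
    unfolding less_ceiling_iff T_def by simp
  finally have "D + j < mu D c B xR k R \<longleftrightarrow> real n < ln (xR\<^sup>2 / B) / ln (1 / c\<^sup>2)" .
  moreover have "c ^ (2 * n) * xR\<^sup>2 = xR\<^sup>2 * (c\<^sup>2)^n"
    by (simp add: power_mult)
  ultimately show ?thesis
    using power_le_threshold_iff[of "xR\<^sup>2" B "c\<^sup>2" n] False assms
    by (auto simp: max_def n_def[symmetric] mult.commute)
qed

lemma threshold_cost_sums:
  fixes P0 P1 :: "real^'n^'n" and e p :: "real^'n" and c B xR :: real and D k R :: nat
  assumes rho: "spectral_radius (P1 ** diag_mat e) < 1"
    and c: "0 < c\<^sup>2" "c\<^sup>2 < 1" and B: "0 < B" and kR: "R < k"
  defines "\<mu> \<equiv> mu D c B xR k R"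
  shows "(\<lambda>j. Omega P0 P1 e D (D + j) p * max (c ^ (2 * (k + (D + j) - R)) * xR\<^sup>2) B) sums
    (B * fD P0 P1 e D \<mu> 1 p
     + c ^ (2 * (k - R)) * xR\<^sup>2 * (gD P0 P1 e D (c\<^sup>2) p - fD P0 P1 e D \<mu> (c\<^sup>2) p))"
proof -
  define Om where "Om j = Omega P0 P1 e D (D + j) p" for j
  define cost where "cost j = max (c ^ (2 * (k + (D + j) - R)) * xR\<^sup>2) B" for j
  define N where "N = c ^ (2 * (k - R)) * xR\<^sup>2"
  define m where "m = \<mu> - D"
  have rho_1: "\<bar>1\<bar> * spectral_radius (P1 ** diag_mat e) < 1"
    using rho by simp
  have rho_c: "\<bar>c\<^sup>2\<bar> * spectral_radius (P1 ** diag_mat e) < 1"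
    using c rho by (rule_tac mult_less_one_if_le[of _ 1]) simp_all
  have tail: "(\<lambda>j. Om (j + m) * b^(D + (j + m))) sums fD P0 P1 e D \<mu> b p"
    if "\<bar>b\<bar> * spectral_radius (P1 ** diag_mat e) < 1" for b
  proof -
    have shift: "D + (j + m) = \<mu> + j" for j
      using mu_ge[of D c B xR k R] unfolding m_def \<mu>_def by linarith
    show ?thesis
      unfolding Om_def shift by (rule fD_sums[OF that]) (simp add: \<mu>_def mu_ge)
  qed
  have cost: "cost j = (if j < m then N * (c\<^sup>2)^(D + j) else B)" for j
  proof -
    have "D + j < \<mu> \<longleftrightarrow> j < m"
      using mu_ge[of D c B xR k R] by (auto simp: m_def \<mu>_def)
    moreover have "c ^ (2 * (k + (D + j) - R)) * xR\<^sup>2 = N * (c\<^sup>2)^(D + j)"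
    proof -
      have "k + (D + j) - R = (k - R) + (D + j)" using kR by simp
      then have "c ^ (2 * (k + (D + j) - R)) = c ^ (2 * (k - R)) * (c\<^sup>2)^(D + j)"
        by (simp only: power_mult power_add)
      then show ?thesis by (simp add: N_def)
    qed
    ultimately show ?thesis
      using max_threshold_eq[OF c B kR, of D j xR] by (simp add: cost_def \<mu>_def)
  qed
  have "(\<lambda>j. Om (j + m) * cost (j + m)) = (\<lambda>j. B * (Om (j + m) * 1^(D + (j + m))))"
    by (simp add: cost mult.commute)
  then have "(\<lambda>j. Om (j + m) * cost (j + m)) sums (B * fD P0 P1 e D \<mu> 1 p)"
    using sums_mult[OF tail[OF rho_1], of B] by simp
  then have "(\<lambda>j. Om j * cost j) sums (B * fD P0 P1 e D \<mu> 1 p + (\<Sum>j<m. Om j * cost j))"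
    by (rule sums_iff_shift[where f="\<lambda>j. Om j * cost j", THEN iffD1])
  moreover have "gD P0 P1 e D (c\<^sup>2) p = fD P0 P1 e D \<mu> (c\<^sup>2) p + (\<Sum>j<m. Om j * (c\<^sup>2)^(D + j))"
  proof -
    have "(\<lambda>j. Om j * (c\<^sup>2)^(D + j)) sums (fD P0 P1 e D \<mu> (c\<^sup>2) p + (\<Sum>j<m. Om j * (c\<^sup>2)^(D + j)))"
      by (rule sums_iff_shift[where f="\<lambda>j. Om j * (c\<^sup>2)^(D + j)", THEN iffD1]) (rule tail[OF rho_c])
    then show ?thesis
      unfolding Om_def by (rule sums_unique2[OF gD_sums[OF rho_c]])
  qed
  moreover have "(\<Sum>j<m. Om j * cost j) = N * (\<Sum>j<m. Om j * (c\<^sup>2)^(D + j))"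
    by (simp add: cost sum_distrib_left mult.left_commute)
  ultimately show ?thesis
    by (simp add: Om_def cost_def N_def)
qed

context white_noise
begin

lemma Omega_expectation_h_at_sums:
  fixes a L c B x z xR :: real and P0 P1 :: "real^'n^'n" and e p :: "real^'n" and D k R :: nat
  assumes a: "1 < a\<^sup>2" and abar: "(a + L)\<^sup>2 < 1"
    and rho: "a\<^sup>2 * spectral_radius (P1 ** diag_mat e) < 1"
    and c: "0 < c\<^sup>2" "c\<^sup>2 < 1" and B: "0 < B" and kR: "R < k"
  defines "g \<equiv> \<lambda>b. gD P0 P1 e D b p" and "f \<equiv> \<lambda>b. fD P0 P1 e D (mu D c B xR k R) b p"
  shows "(\<lambda>j. Omega P0 P1 e D (D + j) p * expectation (h_at a L c B v k R x z xR (D + j))) sums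
    ((x - z)\<^sup>2 * g ((a + L)\<^sup>2) + (2 * (x - z) * z) * g (a * (a + L)) + z\<^sup>2 * g (a\<^sup>2)
     + \<sigma>2 / (a\<^sup>2 - 1) * (g (a\<^sup>2) - g 1)
     - (B * f 1 + c ^ (2 * (k - R)) * xR\<^sup>2 * (g (c\<^sup>2) - f (c\<^sup>2))))"
proof -
  define Om where "Om j = Omega P0 P1 e D (D + j) p" for j
  have g_sums: "(\<lambda>j. Om j * b^(D + j)) sums g b" if "\<bar>b\<bar> \<le> a\<^sup>2" for b
    unfolding Om_def g_def by (intro gD_sums) (rule mult_less_one_if_le[OF abs_ge_zero that rho])
  have "\<bar>a * (a + L)\<bar> \<le> a\<^sup>2"
  proof -
    have "\<bar>a + L\<bar> \<le> \<bar>a\<bar>"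
      using abar a abs_square_less_1[of "a + L"] abs_square_le_1[of a] by linarith
    then show ?thesis
      using mult_left_mono[of "\<bar>a + L\<bar>" "\<bar>a\<bar>" "\<bar>a\<bar>"] by (simp add: abs_mult power2_eq_square)
  qed
  moreover have "\<bar>(a + L)\<^sup>2\<bar> \<le> a\<^sup>2" and "\<bar>a\<^sup>2\<bar> \<le> a\<^sup>2" and "\<bar>1\<bar> \<le> a\<^sup>2"
    using abar a by simp_all
  moreover have "(\<lambda>j. Om j * max (c ^ (2 * (k + (D + j) - R)) * xR\<^sup>2) B)
      sums (B * f 1 + c ^ (2 * (k - R)) * xR\<^sup>2 * (g (c\<^sup>2) - f (c\<^sup>2)))"
  proof -
    have "spectral_radius (P1 ** diag_mat e) < 1"
      using mult_less_one_if_le[of 1 "a\<^sup>2"] rho a by simp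
    then show ?thesis
      unfolding Om_def f_def g_def using c B kR by (rule threshold_cost_sums)
  qed
  moreover have "Om j * expectation (h_at a L c B v k R x z xR (D + j))
      = (x - z)\<^sup>2 * (Om j * ((a + L)\<^sup>2)^(D + j)) + (2 * (x - z) * z) * (Om j * (a * (a + L))^(D + j))
        + z\<^sup>2 * (Om j * (a\<^sup>2)^(D + j)) + \<sigma>2 / (a\<^sup>2 - 1) * (Om j * (a\<^sup>2)^(D + j) - Om j * 1^(D + j))
        - Om j * max (c ^ (2 * (k + (D + j) - R)) * xR\<^sup>2) B" for j
    using a by (simp add: expectation_h_at algebra_simps)
  ultimately show ?thesis
    unfolding Om_def[symmetric] by (simp only:) (intro sums_add sums_diff sums_mult g_sums)
qed

end

theorem mainTheorem1:
  fixes a L c Mv B :: real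
    and Mm :: "'w measure" and v :: "nat \<Rightarrow> 'w \<Rightarrow> real"
    and P0 P1 :: "real^'n^'n" and e p :: "real^'n"
    and D k R :: nat and xk zk xR :: real
  assumes a: "\<bar>a\<bar> > 1"
    and abar: "0 < (a + L)\<^sup>2" "(a + L)\<^sup>2 < 1"
    and c: "(a + L)\<^sup>2 < c\<^sup>2" "c\<^sup>2 < 1"
    and MB: "Mv > 0" "B > 0"
    and prob: "prob_space Mm"
    and noise_meas: "\<And>i. v i \<in> borel_measurable Mm"
    and noise_indep: "prob_space.indep_vars Mm (\<lambda>_. borel) v UNIV"
    and noise_id: "\<And>i. distr Mm borel (v i) = distr Mm borel (v 0)"
    and noise_int: "\<And>i. integrable Mm (\<lambda>\<omega>. (v i \<omega>)\<^sup>2)"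
    and noise_mean: "\<And>i. prob_space.expectation Mm (v i) = 0"
    and noise_var: "\<And>i. prob_space.variance Mm (v i) = Mv"
    and P: "column_stochastic P0" "column_stochastic P1"
    and e: "\<And>i. 0 \<le> e $ i \<and> e $ i \<le> 1"
    and pk: "prob_vector p"
    and rho: "a\<^sup>2 * spectral_radius (P1 ** diag_mat e) < 1"
    and D: "D \<ge> 1"
    and kR: "R < k"
  shows "(\<forall>j. integrable Mm (h_at a L c B v k R xk zk xR (D + j)))
    \<and> summable (\<lambda>j. Omega P0 P1 e D (D + j) p * integral\<^sup>L Mm (h_at a L c B v k R xk zk xR (D + j)))
    \<and> lookahead Mm a L c B v P0 P1 e D k R xk zk xR p =
      (let g = (\<lambda>b. gD P0 P1 e D b p);
           \<mu> = mu D c B xR k R;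
           f = (\<lambda>b. fD P0 P1 e D \<mu> b p);
           abar = a + L;
           Mbar = Mv / (a\<^sup>2 - 1);
           N = c ^ (2 * (k - R)) * xR\<^sup>2
       in g (abar\<^sup>2) * xk\<^sup>2 + 2 * (g (a * abar) - g (abar\<^sup>2)) * xk * zk
          + (g (a\<^sup>2) + g (abar\<^sup>2) - 2 * g (a * abar)) * zk\<^sup>2
          + Mbar * (g (a\<^sup>2) - g 1)
          - (B * f 1 + N * (g (c\<^sup>2) - f (c\<^sup>2))))"
proof -
  interpret white_noise Mm v Mv
    using prob noise_indep noise_int noise_mean noise_var
    by (simp add: white_noise_def white_noise_axioms_def)
  have "1 < a\<^sup>2"
    using one_less_power[OF a, of 2] by simp
  have "0 < c\<^sup>2"
    using abar c by linarith
  from Omega_expectation_h_at_sums[OF \<open>1 < a\<^sup>2\<close> abar(2) rho \<open>0 < c\<^sup>2\<close> c(2) MB(2) kR,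
      of P0 D p xk zk xR]
  show ?thesis
    unfolding Let_def lookahead_def sums_iff
    using integrable_h_at by (simp add: power2_eq_square algebra_simps)
qed

end
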